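(* Let $(M^n,g)$ be a Riemannian manifold with Levi-Civita connection which is semisymmetric, i.e. $[\nabla_a,\nabla_b] R_{cdef}=0$. Then $$R_{abc}{}^m R_{dme}{}^f+R_{bcd}{}^m R_{ame}{}^f+R_{cda}{}^m R_{bme}{}^f+R_{dab}{}^m R_{cme}{}^f - R_{ace}{}^m R_{bdm}{}^f + R_{acm}{}^f R_{bde}{}^m =0,$$ $$R_{am}R_{bce}{}^m + R_{bm}R_{cae}{}^m+ R_{cm}R_{abe}{}^m =0,$$ $$R_{am} R_{bec}{}^m - R_{bm}R_{ace}{}^m + R_{cm} R_{eba}{}^m -R_{em} R_{cab}{}^m =0 .$$
   Context: Abstract index notation with Einstein summation; indices lowered with $g$, $R_{abcd}=R_{abc}{}^eg_{ed}$. $R_{abc}{}^d = \partial_a \Gamma_{bc}^d - \partial_b\Gamma_{ac}^d - \Gamma_{ac}^k\Gamma_{bk}^d + \Gamma_{ak}^d \Gamma_{bc}^k$, $R_{ac}=R_{abc}{}^b$, $[\nabla_a,\nabla_b]=\nabla_a\nabla_b-\nabla_b\nabla_a$. *)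

theory Defs
  imports "HOL-Analysis.Analysis"
begin

text \<open>Local-coordinate description of a Riemannian metric on an open set
  U of R^n (index type 'n, points real^'n). The metric is g x :: real^'n^'n,
  g_ij(x) = g x $ i $ j.\<close>

definition partial :: "'n::finite \<Rightarrow> (real^'n \<Rightarrow> real) \<Rightarrow> real^'n \<Rightarrow> real" where
  "partial i f x = frechet_derivative f (at x) (axis i 1)"

fun partials :: "'n::finite list \<Rightarrow> (real^'n \<Rightarrow> real) \<Rightarrow> real^'n \<Rightarrow> real" where
  "partials [] f = f"
| "partials (i # is) f = partial i (partials is f)"

definition smooth_on :: "(real^'n::finite) set \<Rightarrow> (real^'n \<Rightarrow> real) \<Rightarrow> bool" where
  "smooth_on U f \<longleftrightarrow> (\<forall>is. \<forall>x\<in>U. partials is f differentiable (at x))"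

definition riemannian_metric_on :: "(real^'n::finite) set \<Rightarrow> (real^'n \<Rightarrow> real^'n^'n) \<Rightarrow> bool" where
  "riemannian_metric_on U g \<longleftrightarrow> open U \<and>
     (\<forall>i j. smooth_on U (\<lambda>x. g x $ i $ j)) \<and>
     (\<forall>x\<in>U. transpose (g x) = g x \<and> (\<forall>v. v \<noteq> 0 \<longrightarrow> v \<bullet> (g x *v v) > 0))"

definition ginv :: "(real^'n::finite \<Rightarrow> real^'n^'n) \<Rightarrow> real^'n \<Rightarrow> 'n \<Rightarrow> 'n \<Rightarrow> real" where
  "ginv g x i j = matrix_inv (g x) $ i $ j"

definition christoffel :: "(real^'n::finite \<Rightarrow> real^'n^'n) \<Rightarrow> real^'n \<Rightarrow> 'n \<Rightarrow> 'n \<Rightarrow> 'n \<Rightarrow> real" where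
  "christoffel g x a b c = (1/2) * (\<Sum>d\<in>UNIV. ginv g x c d *
      (partial a (\<lambda>y. g y $ b $ d) x + partial b (\<lambda>y. g y $ a $ d) x
       - partial d (\<lambda>y. g y $ a $ b) x))"

definition Rup :: "(real^'n::finite \<Rightarrow> real^'n^'n) \<Rightarrow> real^'n \<Rightarrow> 'n \<Rightarrow> 'n \<Rightarrow> 'n \<Rightarrow> 'n \<Rightarrow> real" where
  "Rup g x a b c d =
     partial a (\<lambda>y. christoffel g y b c d) x - partial b (\<lambda>y. christoffel g y a c d) x
     - (\<Sum>k\<in>UNIV. christoffel g x a c k * christoffel g x b k d)
     + (\<Sum>k\<in>UNIV. christoffel g x a k d * christoffel g x b c k)"

definition Rdown :: "(real^'n::finite \<Rightarrow> real^'n^'n) \<Rightarrow> real^'n \<Rightarrow> 'n \<Rightarrow> 'n \<Rightarrow> 'n \<Rightarrow> 'n \<Rightarrow> real" where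
  "Rdown g x a b c d = (\<Sum>e\<in>UNIV. Rup g x a b c e * g x $ e $ d)"

definition Ric :: "(real^'n::finite \<Rightarrow> real^'n^'n) \<Rightarrow> real^'n \<Rightarrow> 'n \<Rightarrow> 'n \<Rightarrow> real" where
  "Ric g x a c = (\<Sum>b\<in>UNIV. Rup g x a b c b)"

definition cov_deriv :: "(real^'n::finite \<Rightarrow> real^'n^'n) \<Rightarrow> (real^'n \<Rightarrow> 'n list \<Rightarrow> real)
    \<Rightarrow> real^'n \<Rightarrow> 'n list \<Rightarrow> real" where
  "cov_deriv g T x idx = (case idx of [] \<Rightarrow> 0
     | b # l \<Rightarrow> partial b (\<lambda>y. T y l) x
         - (\<Sum>p<length l. \<Sum>k\<in>UNIV. christoffel g x b (l ! p) k * T x (l[p := k])))"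

definition semisymmetric_on :: "(real^'n::finite) set \<Rightarrow> (real^'n \<Rightarrow> real^'n^'n) \<Rightarrow> bool" where
  "semisymmetric_on U g \<longleftrightarrow>
    (let T = (\<lambda>y l. Rdown g y (l!0) (l!1) (l!2) (l!3));
         NN = cov_deriv g (cov_deriv g T)
     in \<forall>x\<in>U. \<forall>a b c d e f. NN x [a,b,c,d,e,f] - NN x [b,a,c,d,e,f] = 0)"

end

theory Submission
  imports Defs
begin

text \<open>
  Semisymmetry says that the commutator of two covariant derivatives kills the
  curvature tensor. By the Ricci identity this commutator acts on a covariant
  tensor through the curvature as a derivation, so semisymmetry becomes the
  purely algebraic condition that the curvature operators R_ab annihilate the
  (0,4) curvature tensor. From that condition, the skew-symmetries, the pair
  symmetry and the first Bianchi identity, the three identities follow by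
  linear algebra on index expressions.
\<close>

section \<open>Coordinate partial derivatives\<close>

lemma partial_eq_derivative:
  assumes "(f has_derivative f') (at x)"
  shows "partial i f x = f' (axis i 1)"
  using assms unfolding partial_def by (metis frechet_derivative_at)

lemma has_frechet_derivative:
  "f differentiable (at x) \<Longrightarrow> (f has_derivative frechet_derivative f (at x)) (at x)"
  using frechet_derivative_works by blast

lemma partial_local:
  assumes "open U" "x \<in> U" "\<And>y. y \<in> U \<Longrightarrow> f y = h y"
  shows "partial i f x = partial i h x"
proof -
  have "\<And>f'. (f has_derivative f') (at x) \<longleftrightarrow> (h has_derivative f') (at x)"
    using has_derivative_transform_within_open[of f _ x UNIV U h]
      has_derivative_transform_within_open[of h _ x UNIV U f] assms by auto
  then show ?thesis unfolding partial_def frechet_derivative_def by simp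
qed

lemma differentiable_local:
  assumes "open U" "x \<in> U" "\<And>y. y \<in> U \<Longrightarrow> f y = h y" "f differentiable (at x)"
  shows "h differentiable (at x)"
  using has_derivative_transform_within_open[of f _ x UNIV U h] assms
  unfolding differentiable_def by auto

lemma partial_const: "partial i (\<lambda>y. c) x = 0"
  unfolding partial_def by simp

lemma partial_add:
  assumes "f differentiable (at x)" "h differentiable (at x)"
  shows "partial i (\<lambda>y. f y + h y) x = partial i f x + partial i h x"
  using partial_eq_derivative[OF has_derivative_add[OF has_frechet_derivative[OF assms(1)]
        has_frechet_derivative[OF assms(2)]]]
    partial_eq_derivative[OF has_frechet_derivative[OF assms(1)]]
    partial_eq_derivative[OF has_frechet_derivative[OF assms(2)]]
  by simp

lemma partial_diff:
  assumes "f differentiable (at x)" "h differentiable (at x)"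
  shows "partial i (\<lambda>y. f y - h y) x = partial i f x - partial i h x"
  using partial_eq_derivative[OF has_derivative_diff[OF has_frechet_derivative[OF assms(1)]
        has_frechet_derivative[OF assms(2)]]]
    partial_eq_derivative[OF has_frechet_derivative[OF assms(1)]]
    partial_eq_derivative[OF has_frechet_derivative[OF assms(2)]]
  by simp

lemma partial_mult:
  assumes "f differentiable (at x)" "h differentiable (at x)"
  shows "partial i (\<lambda>y. f y * h y) x = f x * partial i h x + partial i f x * h x"
  using partial_eq_derivative[OF has_derivative_mult[OF has_frechet_derivative[OF assms(1)]
        has_frechet_derivative[OF assms(2)]]]
    partial_eq_derivative[OF has_frechet_derivative[OF assms(1)]]
    partial_eq_derivative[OF has_frechet_derivative[OF assms(2)]]
  by simp

lemma partial_divide: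
  assumes "f differentiable (at x)" "h differentiable (at x)" "h x \<noteq> 0"
  shows "partial i (\<lambda>y. f y / h y) x = (partial i f x * h x - f x * partial i h x) / (h x * h x)"
  using partial_eq_derivative[OF has_derivative_divide'[OF has_frechet_derivative[OF assms(1)]
        has_frechet_derivative[OF assms(2)] assms(3)]]
    partial_eq_derivative[OF has_frechet_derivative[OF assms(1)]]
    partial_eq_derivative[OF has_frechet_derivative[OF assms(2)]]
  by simp

lemma partial_sum:
  assumes "\<And>a. a \<in> A \<Longrightarrow> f a differentiable (at x)"
  shows "partial i (\<lambda>y. \<Sum>a\<in>A. f a y) x = (\<Sum>a\<in>A. partial i (f a) x)"
proof -
  have "((\<lambda>y. \<Sum>a\<in>A. f a y) has_derivative (\<lambda>v. \<Sum>a\<in>A. frechet_derivative (f a) (at x) v)) (at x)"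
    by (rule has_derivative_sum) (use assms has_frechet_derivative in auto)
  from partial_eq_derivative[OF this] show ?thesis
    using partial_eq_derivative[OF has_frechet_derivative[OF assms]] by simp
qed

section \<open>Smooth functions on an open set\<close>

lemma partials_snoc: "partials (is @ [i]) f = partials is (partial i f)"
  by (induct "is") auto

lemma smooth_on_differentiable: "smooth_on U f \<Longrightarrow> x \<in> U \<Longrightarrow> f differentiable (at x)"
  unfolding smooth_on_def using partials.simps(1) by metis

lemma smooth_on_partial: "smooth_on U f \<Longrightarrow> smooth_on U (partial i f)"
  unfolding smooth_on_def by (metis partials_snoc)

lemma smooth_on_coinduct:
  fixes Q :: "(real^'n::finite \<Rightarrow> real) \<Rightarrow> bool"
  assumes "Q f"
    and step: "\<And>k. Q k \<Longrightarrow> (\<forall>x\<in>U. k differentiable (at x)) \<and> (\<forall>i. Q (partial i k))"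
  shows "smooth_on U f"
proof -
  have "\<forall>k. Q k \<longrightarrow> (\<forall>x\<in>U. partials is k differentiable (at x))" for "is"
  proof (induct "is" rule: rev_induct)
    case Nil then show ?case using step by simp
  next
    case (snoc i js) then show ?case using step by (simp add: partials_snoc)
  qed
  then show ?thesis unfolding smooth_on_def using assms(1) by blast
qed

lemma smooth_on_local:
  fixes U :: "(real^'n::finite) set"
  assumes "open U" "smooth_on U f" "\<And>y. y \<in> U \<Longrightarrow> f y = h y"
  shows "smooth_on U h"
proof (rule smooth_on_coinduct[where Q = "\<lambda>k. \<exists>f. smooth_on U f \<and> (\<forall>y\<in>U. f y = k y)"])
  show "\<exists>f. smooth_on U f \<and> (\<forall>y\<in>U. f y = h y)" using assms by blast
next
  fix k :: "real^'n \<Rightarrow> real" assume "\<exists>f. smooth_on U f \<and> (\<forall>y\<in>U. f y = k y)"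
  then obtain f where f: "smooth_on U f" "\<forall>y\<in>U. f y = k y" by blast
  show "(\<forall>x\<in>U. k differentiable (at x)) \<and> (\<forall>i. \<exists>f. smooth_on U f \<and> (\<forall>y\<in>U. f y = partial i k y))"
  proof (intro conjI ballI allI)
    fix x assume "x \<in> U"
    then show "k differentiable (at x)"
      using differentiable_local[OF assms(1) \<open>x\<in>U\<close>, of f k] f smooth_on_differentiable by blast
  next
    fix i
    show "\<exists>f. smooth_on U f \<and> (\<forall>y\<in>U. f y = partial i k y)"
      using f smooth_on_partial partial_local[OF assms(1), of _ f k] by blast
  qed
qed

lemma smooth_on_const:
  fixes U :: "(real^'n::finite) set"
  assumes "open U"
  shows "smooth_on U (\<lambda>y. c)"
proof (rule smooth_on_coinduct[where Q = "\<lambda>k. \<exists>c. \<forall>y\<in>U. k y = c"])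
  fix k :: "real^'n \<Rightarrow> real" assume "\<exists>c. \<forall>y\<in>U. k y = c"
  then obtain c where c: "\<forall>y\<in>U. k y = c" by blast
  show "(\<forall>x\<in>U. k differentiable (at x)) \<and> (\<forall>i. \<exists>c. \<forall>y\<in>U. partial i k y = c)"
  proof (intro conjI ballI allI)
    fix x assume "x \<in> U"
    then show "k differentiable (at x)"
      using differentiable_local[OF assms \<open>x\<in>U\<close>, of "\<lambda>_. c" k] c by simp
  next
    fix i
    have "\<forall>y\<in>U. partial i k y = 0"
      using partial_local[OF assms, of _ k "\<lambda>_. c"] c partial_const by metis
    then show "\<exists>c. \<forall>y\<in>U. partial i k y = c" by blast
  qed
qed simp

text \<open>Finite sums of products f_1 h_1 + ... + f_k h_k, represented by the list of
  factor pairs. By the Leibniz rule the class of such sums with smooth factors is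
  closed under partial differentiation; this gives smoothness of products.\<close>

fun sum_of_products :: "((real^'n::finite \<Rightarrow> real) \<times> (real^'n \<Rightarrow> real)) list \<Rightarrow> real^'n \<Rightarrow> real" where
  "sum_of_products [] y = 0"
| "sum_of_products (p # ps) y = fst p y * snd p y + sum_of_products ps y"

fun leibniz_terms :: "'n \<Rightarrow> ((real^'n::finite \<Rightarrow> real) \<times> (real^'n \<Rightarrow> real)) list
    \<Rightarrow> ((real^'n \<Rightarrow> real) \<times> (real^'n \<Rightarrow> real)) list" where
  "leibniz_terms i [] = []"
| "leibniz_terms i (p # ps) = (partial i (fst p), snd p) # (fst p, partial i (snd p)) # leibniz_terms i ps"

lemma sum_of_products_differentiable:
  assumes "\<forall>p\<in>set ps. fst p differentiable (at x) \<and> snd p differentiable (at x)"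
  shows "sum_of_products ps differentiable (at x)"
  using assms
proof (induct ps)
  case Nil
  have "sum_of_products [] = (\<lambda>y. 0::real)" by (rule ext) simp
  then show ?case by simp
next
  case (Cons p ps)
  have "sum_of_products (p # ps) = (\<lambda>y. fst p y * snd p y + sum_of_products ps y)" by (rule ext) simp
  then show ?case using Cons by simp
qed

lemma partial_sum_of_products:
  assumes "\<forall>p\<in>set ps. fst p differentiable (at x) \<and> snd p differentiable (at x)"
  shows "partial i (sum_of_products ps) x = sum_of_products (leibniz_terms i ps) x"
  using assms
proof (induct ps)
  case Nil
  have "sum_of_products [] = (\<lambda>y. 0::real)" by (rule ext) simp
  then show ?case by (simp add: partial_const)
next
  case (Cons p ps)
  have e: "sum_of_products (p # ps) = (\<lambda>y. fst p y * snd p y + sum_of_products ps y)"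
    by (rule ext) simp
  have d: "(\<lambda>y. fst p y * snd p y) differentiable (at x)" using Cons by simp
  have d2: "sum_of_products ps differentiable (at x)"
    by (rule sum_of_products_differentiable) (use Cons.prems in auto)
  show ?case unfolding e
    using partial_add[OF d d2, of i] partial_mult[of "fst p" x "snd p" i] Cons by simp
qed

lemma smooth_on_sum_of_products:
  fixes U :: "(real^'n::finite) set"
  assumes "open U" "\<forall>p\<in>set ps. smooth_on U (fst p) \<and> smooth_on U (snd p)"
  shows "smooth_on U (sum_of_products ps)"
proof (rule smooth_on_coinduct[where Q = "\<lambda>k. \<exists>ps. (\<forall>p\<in>set ps. smooth_on U (fst p) \<and> smooth_on U (snd p))
    \<and> (\<forall>y\<in>U. sum_of_products ps y = k y)"])
  show "\<exists>ps'. (\<forall>p\<in>set ps'. smooth_on U (fst p) \<and> smooth_on U (snd p))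
      \<and> (\<forall>y\<in>U. sum_of_products ps' y = sum_of_products ps y)"
    using assms by blast
next
  fix k :: "real^'n \<Rightarrow> real"
  assume "\<exists>ps. (\<forall>p\<in>set ps. smooth_on U (fst p) \<and> smooth_on U (snd p))
    \<and> (\<forall>y\<in>U. sum_of_products ps y = k y)"
  then obtain ps where ps: "\<forall>p\<in>set ps. smooth_on U (fst p) \<and> smooth_on U (snd p)"
    "\<forall>y\<in>U. sum_of_products ps y = k y"
    by blast
  have dd: "\<forall>p\<in>set ps. fst p differentiable (at x) \<and> snd p differentiable (at x)" if "x \<in> U" for x
    using ps(1) smooth_on_differentiable that by blast
  show "(\<forall>x\<in>U. k differentiable (at x)) \<and> (\<forall>i. \<exists>ps. (\<forall>p\<in>set ps. smooth_on U (fst p) \<and> smooth_on U (snd p))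
    \<and> (\<forall>y\<in>U. sum_of_products ps y = partial i k y))"
  proof (intro conjI ballI allI)
    fix x assume x: "x \<in> U"
    show "k differentiable (at x)"
      using differentiable_local[OF assms(1) x, of "sum_of_products ps" k] ps
        sum_of_products_differentiable[OF dd[OF x]] by blast
  next
    fix i
    have "\<forall>p\<in>set (leibniz_terms i ps). smooth_on U (fst p) \<and> smooth_on U (snd p)"
      using ps(1) by (induct ps) (auto intro: smooth_on_partial)
    moreover have "\<forall>y\<in>U. sum_of_products (leibniz_terms i ps) y = partial i k y"
    proof
      fix y assume y: "y \<in> U"
      have "partial i k y = partial i (sum_of_products ps) y"
        using partial_local[OF assms(1) y, of k "sum_of_products ps"] ps(2) by metis
      then show "sum_of_products (leibniz_terms i ps) y = partial i k y"
        using partial_sum_of_products[OF dd[OF y]] by simp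
    qed
    ultimately show "\<exists>ps. (\<forall>p\<in>set ps. smooth_on U (fst p) \<and> smooth_on U (snd p))
      \<and> (\<forall>y\<in>U. sum_of_products ps y = partial i k y)" by blast
  qed
qed

lemma smooth_on_mult:
  assumes "open U" "smooth_on U f" "smooth_on U h"
  shows "smooth_on U (\<lambda>y. f y * h y)"
proof -
  have "smooth_on U (sum_of_products [(f, h)])"
    using smooth_on_sum_of_products[OF assms(1), of "[(f,h)]"] assms by simp
  moreover have "sum_of_products [(f, h)] = (\<lambda>y. f y * h y)" by (rule ext) simp
  ultimately show ?thesis by simp
qed

lemma smooth_on_add:
  assumes "open U" "smooth_on U f" "smooth_on U h"
  shows "smooth_on U (\<lambda>y. f y + h y)"
proof -
  have "smooth_on U (sum_of_products [(f, \<lambda>_. 1), (h, \<lambda>_. 1)])"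
    using smooth_on_sum_of_products[OF assms(1), of "[(f,\<lambda>_. 1), (h, \<lambda>_. 1)]"] assms
      smooth_on_const[OF assms(1)] by simp
  moreover have "sum_of_products [(f, \<lambda>_. 1), (h, \<lambda>_. 1)] = (\<lambda>y. f y + h y)" by (rule ext) simp
  ultimately show ?thesis by simp
qed

lemma smooth_on_diff:
  assumes "open U" "smooth_on U f" "smooth_on U h"
  shows "smooth_on U (\<lambda>y. f y - h y)"
  using smooth_on_add[OF assms(1,2) smooth_on_mult[OF assms(1) smooth_on_const[OF assms(1)] assms(3),
        of "-1"]]
  by simp

lemma smooth_on_sum:
  assumes "open U" "finite A" "\<And>a. a \<in> A \<Longrightarrow> smooth_on U (f a)"
  shows "smooth_on U (\<lambda>y. \<Sum>a\<in>A. f a y)"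
  using assms(2,3)
proof (induct A rule: finite_induct)
  case empty then show ?case using smooth_on_const[OF assms(1)] by simp
next
  case (insert a A) then show ?case using smooth_on_add[OF assms(1)] by simp
qed

lemma smooth_on_prod:
  assumes "open U" "finite A" "\<And>a. a \<in> A \<Longrightarrow> smooth_on U (f a)"
  shows "smooth_on U (\<lambda>y. \<Prod>a\<in>A. f a y)"
  using assms(2,3)
proof (induct A rule: finite_induct)
  case empty then show ?case using smooth_on_const[OF assms(1)] by simp
next
  case (insert a A) then show ?case using smooth_on_mult[OF assms(1)] by simp
qed

text \<open>Quotients of smooth functions by nonvanishing smooth functions are smooth:
  the class of such quotients is closed under the quotient rule.\<close>

lemma smooth_on_divide:
  fixes U :: "(real^'n::finite) set"
  assumes "open U" "smooth_on U f" "smooth_on U h" "\<And>y. y \<in> U \<Longrightarrow> h y \<noteq> 0"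
  shows "smooth_on U (\<lambda>y. f y / h y)"
proof (rule smooth_on_coinduct[where Q = "\<lambda>k. \<exists>p q. smooth_on U p \<and> smooth_on U q \<and> (\<forall>y\<in>U. q y \<noteq> 0)
    \<and> (\<forall>y\<in>U. k y = p y / q y)"])
  show "\<exists>p q. smooth_on U p \<and> smooth_on U q \<and> (\<forall>y\<in>U. q y \<noteq> 0) \<and> (\<forall>y\<in>U. f y / h y = p y / q y)"
    using assms by blast
next
  fix k :: "real^'n \<Rightarrow> real"
  assume "\<exists>p q. smooth_on U p \<and> smooth_on U q \<and> (\<forall>y\<in>U. q y \<noteq> 0) \<and> (\<forall>y\<in>U. k y = p y / q y)"
  then obtain p q where pq: "smooth_on U p" "smooth_on U q" "\<forall>y\<in>U. q y \<noteq> 0" "\<forall>y\<in>U. k y = p y / q y"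
    by blast
  show "(\<forall>x\<in>U. k differentiable (at x)) \<and> (\<forall>i. \<exists>p q. smooth_on U p \<and> smooth_on U q \<and> (\<forall>y\<in>U. q y \<noteq> 0)
    \<and> (\<forall>y\<in>U. partial i k y = p y / q y))"
  proof (intro conjI ballI allI)
    fix x assume x: "x \<in> U"
    have "(\<lambda>y. p y / q y) differentiable (at x)"
      using pq smooth_on_differentiable x by (intro differentiable_divide) auto
    then show "k differentiable (at x)"
      using differentiable_local[OF assms(1) x, of "\<lambda>y. p y / q y" k] pq by simp
  next
    fix i
    let ?p = "\<lambda>y. partial i p y * q y - p y * partial i q y"
    let ?q = "\<lambda>y. q y * q y"
    have "smooth_on U ?p"
      using pq by (intro smooth_on_diff smooth_on_mult smooth_on_partial assms(1)) auto
    moreover have "smooth_on U ?q" using pq by (intro smooth_on_mult assms(1)) auto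
    moreover have "\<forall>y\<in>U. ?q y \<noteq> 0" using pq by simp
    moreover have "\<forall>y\<in>U. partial i k y = ?p y / ?q y"
    proof
      fix y assume y: "y \<in> U"
      have "partial i k y = partial i (\<lambda>y. p y / q y) y"
        using partial_local[OF assms(1) y, of k "\<lambda>y. p y / q y"] pq by metis
      also have "\<dots> = ?p y / ?q y"
        using partial_divide[OF smooth_on_differentiable[OF pq(1) y]
            smooth_on_differentiable[OF pq(2) y]] pq(3) y by simp
      finally show "partial i k y = ?p y / ?q y" .
    qed
    ultimately show "\<exists>p q. smooth_on U p \<and> smooth_on U q \<and> (\<forall>y\<in>U. q y \<noteq> 0)
      \<and> (\<forall>y\<in>U. partial i k y = p y / q y)" by blast
  qed
qed

lemma smooth_on_det:
  fixes M :: "real^'m::finite \<Rightarrow> real^'n::finite^'n"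
  assumes "open U" "\<And>r s. smooth_on U (\<lambda>y. M y $ r $ s)"
  shows "smooth_on U (\<lambda>y. det (M y))"
  unfolding det_def
  by (intro smooth_on_sum smooth_on_mult smooth_on_prod smooth_on_const assms finite_permutations) auto

section \<open>Symmetry of second partial derivatives\<close>

lemma has_derivative_along_line:
  fixes f :: "'a::real_normed_vector \<Rightarrow> real"
  assumes "f differentiable (at (a + s *\<^sub>R v))"
  shows "((\<lambda>s. f (a + s *\<^sub>R v)) has_derivative (\<lambda>h. h * frechet_derivative f (at (a + s *\<^sub>R v)) v)) (at s)"
proof -
  have inner: "((\<lambda>s. a + s *\<^sub>R v) has_derivative (\<lambda>h. h *\<^sub>R v)) (at s)"
    by (auto intro!: derivative_eq_intros)
  have "((f \<circ> (\<lambda>s. a + s *\<^sub>R v)) has_derivative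
      (frechet_derivative f (at (a + s *\<^sub>R v)) \<circ> (\<lambda>h. h *\<^sub>R v))) (at s)"
    by (rule diff_chain_at[OF inner]) (use assms frechet_derivative_works in blast)
  moreover have "(frechet_derivative f (at (a + s *\<^sub>R v)) \<circ> (\<lambda>h. h *\<^sub>R v))
      = (\<lambda>h. h * frechet_derivative f (at (a + s *\<^sub>R v)) v)"
    using linear_scale[OF linear_frechet_derivative[OF assms]] by (auto simp: o_def)
  ultimately show ?thesis by (simp add: o_def)
qed

text \<open>The second difference of f at x in the directions u and v with step t; it
  is symmetric in u and v and approximates t^2 times the mixed second derivative.\<close>

definition second_difference :: "('a::real_normed_vector \<Rightarrow> real) \<Rightarrow> 'a \<Rightarrow> 'a \<Rightarrow> 'a \<Rightarrow> real \<Rightarrow> real"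
  where "second_difference f x u v t = f (x + t *\<^sub>R u + t *\<^sub>R v) - f (x + t *\<^sub>R u) - f (x + t *\<^sub>R v) + f x"

lemma second_difference_commute: "second_difference f x u v t = second_difference f x v u t"
  unfolding second_difference_def by (simp add: algebra_simps)

text \<open>Mean value theorem applied to s \<mapsto> f(x + t v + s u) - f(x + s u).\<close>

lemma second_difference_mean_value:
  fixes f :: "'a::real_normed_vector \<Rightarrow> real"
  assumes diff: "\<And>s. \<bar>s\<bar> \<le> \<bar>t\<bar> \<Longrightarrow>
      f differentiable (at (x + t *\<^sub>R v + s *\<^sub>R u)) \<and> f differentiable (at (x + s *\<^sub>R u))"
  obtains \<xi> where "\<bar>\<xi>\<bar> \<le> \<bar>t\<bar>"
    "second_difference f x u v t = t * (frechet_derivative f (at (x + t *\<^sub>R v + \<xi> *\<^sub>R u)) u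
        - frechet_derivative f (at (x + \<xi> *\<^sub>R u)) u)"
proof -
  define D where "D s = frechet_derivative f (at (x + t *\<^sub>R v + s *\<^sub>R u)) u
      - frechet_derivative f (at (x + s *\<^sub>R u)) u" for s
  define \<phi> where "\<phi> s = f (x + t *\<^sub>R v + s *\<^sub>R u) - f (x + s *\<^sub>R u)" for s
  have der: "(\<phi> has_derivative (\<lambda>h. h * D s)) (at s within S)" if "\<bar>s\<bar> \<le> \<bar>t\<bar>" for s S
  proof -
    have "((\<lambda>s. f (x + t *\<^sub>R v + s *\<^sub>R u) - f (x + s *\<^sub>R u)) has_derivative
        (\<lambda>h. h * frechet_derivative f (at (x + t *\<^sub>R v + s *\<^sub>R u)) u
           - h * frechet_derivative f (at (x + s *\<^sub>R u)) u)) (at s)"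
      using diff[OF that] by (intro has_derivative_diff has_derivative_along_line) auto
    then show ?thesis
      unfolding D_def \<phi>_def by (auto simp: algebra_simps intro: has_derivative_at_withinI)
  qed
  obtain \<xi> where \<xi>: "\<bar>\<xi>\<bar> \<le> \<bar>t\<bar>" "\<phi> t - \<phi> 0 = t * D \<xi>"
  proof (cases "t \<ge> 0")
    case True
    obtain \<xi> where "\<xi> \<in> {0..t}" "\<phi> t - \<phi> 0 = (t - 0) * D \<xi>"
      using mvt_very_simple[OF True, of \<phi> "\<lambda>s h. h * D s"] der by auto
    then show ?thesis using True by (intro that[of \<xi>]) auto
  next
    case False
    obtain \<xi> where "\<xi> \<in> {t..0}" "\<phi> 0 - \<phi> t = (0 - t) * D \<xi>"
      using mvt_very_simple[of t 0 \<phi> "\<lambda>s h. h * D s"] False der by auto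
    then show ?thesis using False by (intro that[of \<xi>]) (auto simp: algebra_simps)
  qed
  moreover have "second_difference f x u v t = \<phi> t - \<phi> 0"
    unfolding second_difference_def \<phi>_def by (simp add: algebra_simps)
  ultimately show ?thesis using that unfolding D_def by auto
qed

lemma increment_difference_estimate:
  fixes F :: "'a::real_normed_vector \<Rightarrow> real"
  assumes F: "(F has_derivative F') (at x)" and e: "e > 0"
  obtains d where "d > 0" "\<And>v w. norm v < d \<Longrightarrow> norm w < d \<Longrightarrow>
      \<bar>F (x + v) - F (x + w) - F' (v - w)\<bar> \<le> e * (norm v + norm w)"
proof -
  obtain d where d: "d > 0"
      "\<And>y. norm (y - x) < d \<Longrightarrow> norm (F y - F x - F' (y - x)) \<le> e * norm (y - x)"
    using F e unfolding has_derivative_at_alt by blast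
  have "\<bar>F (x + v) - F (x + w) - F' (v - w)\<bar> \<le> e * (norm v + norm w)"
    if "norm v < d" "norm w < d" for v w
  proof -
    have "\<bar>F (x + v) - F x - F' v\<bar> \<le> e * norm v" "\<bar>F (x + w) - F x - F' w\<bar> \<le> e * norm w"
      using d(2)[of "x + v"] d(2)[of "x + w"] that by auto
    moreover have "F' (v - w) = F' v - F' w"
      using linear_diff[OF has_derivative_linear[OF F]] .
    ultimately show ?thesis unfolding abs_le_iff distrib_left by linarith
  qed
  with d(1) show ?thesis using that by blast
qed

lemma norm_axis_steps:
  fixes s t :: real
  assumes "\<bar>s\<bar> \<le> \<bar>t\<bar>"
  shows "norm (t *\<^sub>R axis j 1 + s *\<^sub>R axis i 1 :: real^'n::finite) \<le> 2 * \<bar>t\<bar>"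
    and "norm (s *\<^sub>R axis i 1 :: real^'n) \<le> \<bar>t\<bar>"
  using norm_triangle_ineq[of "t *\<^sub>R axis j 1 :: real^'n" "s *\<^sub>R axis i 1"] assms by auto

lemma axis_steps_in_ball:
  fixes s t :: real and x :: "real^'n::finite"
  assumes "\<bar>s\<bar> \<le> \<bar>t\<bar>" "2 * \<bar>t\<bar> < r"
  shows "x + t *\<^sub>R axis j 1 + s *\<^sub>R axis i 1 \<in> ball x r \<and> x + s *\<^sub>R axis i 1 \<in> ball x r"
proof -
  have "dist (x + (t *\<^sub>R axis j 1 + s *\<^sub>R axis i 1)) x < r" "dist (x + s *\<^sub>R axis i 1) x < r"
    using norm_axis_steps(1)[OF assms(1), of j i] norm_axis_steps(2)[OF assms(1), of i] assms(2)
    by (simp_all add: dist_norm)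
  then show ?thesis by (auto simp: dist_commute add.assoc)
qed

lemma second_difference_approx:
  fixes f :: "real^'n::finite \<Rightarrow> real"
  assumes U: "open U" "x \<in> U" and fd: "\<And>y. y \<in> U \<Longrightarrow> f differentiable (at y)"
    and Fd: "partial i f differentiable (at x)"
    and e: "e > 0"
  shows "\<exists>\<delta>>0. \<forall>t. 0 < \<bar>t\<bar> \<and> \<bar>t\<bar> < \<delta> \<longrightarrow>
    \<bar>second_difference f x (axis i 1) (axis j 1) t - t * t * partial j (partial i f) x\<bar> \<le> 3 * e * (t * t)"
proof -
  define F where "F = partial i f"
  define F' where "F' = frechet_derivative F (at x)"
  define ei :: "real^'n" where "ei = axis i 1"
  define ej :: "real^'n" where "ej = axis j 1"
  have hF: "(F has_derivative F') (at x)" unfolding F'_def F_def using Fd has_frechet_derivative by blast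
  have F_eq: "frechet_derivative f (at y) ei = F y" for y
    unfolding F_def partial_def ei_def ..
  obtain d where d: "d > 0" "\<And>v w. norm v < d \<Longrightarrow> norm w < d \<Longrightarrow>
      \<bar>F (x + v) - F (x + w) - F' (v - w)\<bar> \<le> e * (norm v + norm w)"
    using increment_difference_estimate[OF hF e] by blast
  obtain r where r: "r > 0" "ball x r \<subseteq> U" using U open_contains_ball by blast
  define \<delta> where "\<delta> = min (r/2) (d/2)"
  have key: "\<bar>second_difference f x ei ej t - t * t * F' ej\<bar> \<le> 3 * e * (t * t)"
    if t: "0 < \<bar>t\<bar>" "\<bar>t\<bar> < \<delta>" for t
  proof -
    have "x + t *\<^sub>R ej + s *\<^sub>R ei \<in> U \<and> x + s *\<^sub>R ei \<in> U" if "\<bar>s\<bar> \<le> \<bar>t\<bar>" for s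
      using axis_steps_in_ball[OF that, of r x j i] t r unfolding \<delta>_def ei_def ej_def by auto
    then obtain \<xi> where \<xi>: "\<bar>\<xi>\<bar> \<le> \<bar>t\<bar>"
        "second_difference f x ei ej t = t * (F (x + t *\<^sub>R ej + \<xi> *\<^sub>R ei) - F (x + \<xi> *\<^sub>R ei))"
      using second_difference_mean_value[of t f x ej ei] fd unfolding F_eq by blast
    define v1 where "v1 = t *\<^sub>R ej + \<xi> *\<^sub>R ei"
    define v2 where "v2 = \<xi> *\<^sub>R ei"
    have nv: "norm v1 \<le> 2 * \<bar>t\<bar>" "norm v2 \<le> \<bar>t\<bar>"
      using norm_axis_steps[OF \<xi>(1)] unfolding v1_def v2_def ei_def ej_def by auto
    have "F' (v1 - v2) = t * F' ej"
      using linear_scale[OF has_derivative_linear[OF hF], of t ej] by (simp add: v1_def v2_def)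
    then have "\<bar>F (x + v1) - F (x + v2) - t * F' ej\<bar> \<le> e * (norm v1 + norm v2)"
      using d(2)[of v1 v2] nv t unfolding \<delta>_def by auto
    also have "\<dots> \<le> 3 * e * \<bar>t\<bar>"
      using mult_left_mono[of "norm v1 + norm v2" "3 * \<bar>t\<bar>" e] nv e by simp
    finally have main: "\<bar>F (x + v1) - F (x + v2) - t * F' ej\<bar> \<le> 3 * e * \<bar>t\<bar>" .
    have "\<bar>second_difference f x ei ej t - t * t * F' ej\<bar>
        = \<bar>t\<bar> * \<bar>F (x + v1) - F (x + v2) - t * F' ej\<bar>"
      unfolding \<xi>(2) v1_def v2_def by (simp add: algebra_simps flip: abs_mult)
    also have "\<dots> \<le> \<bar>t\<bar> * (3 * e * \<bar>t\<bar>)" using main by (simp add: mult_left_mono)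
    also have "\<dots> = 3 * e * (t * t)" by simp
    finally show ?thesis .
  qed
  moreover have "\<delta> > 0" using d r by (simp add: \<delta>_def)
  moreover have "partial j (partial i f) x = F' ej" unfolding partial_def F'_def F_def ej_def ..
  ultimately show ?thesis unfolding ei_def ej_def by auto
qed

theorem partial_commute:
  fixes f :: "real^'n::finite \<Rightarrow> real"
  assumes "open U" "smooth_on U f" "x \<in> U"
  shows "partial i (partial j f) x = partial j (partial i f) x"
proof -
  have fd: "\<And>y. y \<in> U \<Longrightarrow> f differentiable (at y)" using assms smooth_on_differentiable by blast
  have Fi: "partial i f differentiable (at x)" and Fj: "partial j f differentiable (at x)"
    using assms smooth_on_differentiable smooth_on_partial by blast+
  define A where "A = partial j (partial i f) x"
  define B where "B = partial i (partial j f) x"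
  have close: "\<bar>A - B\<bar> \<le> 6 * e" if e: "e > 0" for e
  proof -
    obtain d1 where d1: "d1 > 0" "\<forall>t. 0 < \<bar>t\<bar> \<and> \<bar>t\<bar> < d1 \<longrightarrow>
        \<bar>second_difference f x (axis i 1) (axis j 1) t - t * t * A\<bar> \<le> 3 * e * (t * t)"
      using second_difference_approx[OF assms(1,3) fd Fi e, of j] unfolding A_def by blast
    obtain d2 where d2: "d2 > 0" "\<forall>t. 0 < \<bar>t\<bar> \<and> \<bar>t\<bar> < d2 \<longrightarrow>
        \<bar>second_difference f x (axis i 1) (axis j 1) t - t * t * B\<bar> \<le> 3 * e * (t * t)"
      using second_difference_approx[OF assms(1,3) fd Fj e, of i] second_difference_commute
      unfolding B_def by metis
    define t where "t = min d1 d2 / 2"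
    have t: "0 < \<bar>t\<bar>" "\<bar>t\<bar> < d1" "\<bar>t\<bar> < d2" using d1 d2 by (auto simp: t_def)
    define S where "S = second_difference f x (axis i 1) (axis j 1) t"
    have "\<bar>S - t * t * A\<bar> \<le> 3 * e * (t * t)" "\<bar>S - t * t * B\<bar> \<le> 3 * e * (t * t)"
      using d1(2) d2(2) t unfolding S_def by blast+
    then have "\<bar>t * t * A - t * t * B\<bar> \<le> 2 * (3 * e * (t * t))"
      unfolding abs_le_iff by linarith
    moreover have "\<bar>t * t * A - t * t * B\<bar> = t * t * \<bar>A - B\<bar>"
      by (simp add: abs_mult flip: right_diff_distrib)
    ultimately have "t * t * \<bar>A - B\<bar> \<le> t * t * (6 * e)" by (simp add: mult_ac)
    moreover have "0 < t * t" using t(1) by (simp add: zero_less_mult_iff, linarith)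
    ultimately show ?thesis using mult_le_cancel_left_pos by blast
  qed
  have "\<bar>A - B\<bar> \<le> 0"
  proof (rule ccontr)
    assume "\<not> \<bar>A - B\<bar> \<le> 0"
    then show False using close[of "\<bar>A - B\<bar> / 12"] by simp
  qed
  then show ?thesis unfolding A_def B_def by simp
qed

section \<open>Inverse of a positive definite matrix\<close>

lemma positive_definite_invertible:
  fixes G :: "real^'n::finite^'n"
  assumes pd: "\<forall>v. v \<noteq> 0 \<longrightarrow> v \<bullet> (G *v v) > 0"
  shows "invertible G"
proof -
  have "\<forall>v. G *v v = 0 \<longrightarrow> v = 0"
    using pd by (metis inner_zero_right less_irrefl)
  then show ?thesis using matrix_left_invertible_ker invertible_left_inverse by blast
qed

lemma matrix_inv_contract:
  fixes G :: "real^'n::finite^'n"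
  assumes "invertible G"
  shows "(\<Sum>k\<in>UNIV. G $ i $ k * matrix_inv G $ k $ j) = (if i = j then 1 else 0)"
proof -
  have "G ** matrix_inv G = mat 1"
    using assms unfolding invertible_def matrix_inv_def by (metis (mono_tags, lifting) someI_ex)
  then have "(G ** matrix_inv G) $ i $ j = mat 1 $ i $ j" by simp
  then show ?thesis by (simp add: matrix_matrix_mult_def mat_def)
qed

text \<open>Cramer's rule for the entries of the inverse; it shows that the entries of
  the inverse are quotients of polynomials in the entries of the matrix.\<close>

lemma matrix_inv_cramer:
  fixes G :: "real^'n::finite^'n"
  assumes "invertible G"
  shows "matrix_inv G $ i $ j = det (\<chi> r s. if s = i then (if r = j then 1 else 0) else G $ r $ s) / det G"
proof -
  have d: "det G \<noteq> 0" using assms invertible_det_nz by blast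
  define xv :: "real^'n" where "xv = (\<chi> k. matrix_inv G $ k $ j)"
  define b :: "real^'n" where "b = (\<chi> r. if r = j then 1 else 0)"
  have "G *v xv = b"
    using matrix_inv_contract[OF assms] unfolding xv_def b_def
    by (simp add: matrix_vector_mult_def vec_eq_iff)
  then have "xv = (\<chi> k. det (\<chi> i j. if j = k then b $ i else G $ i $ j) / det G)"
    using cramer[OF d] by blast
  then show ?thesis unfolding xv_def b_def by (simp add: vec_eq_iff if_distrib cong: if_cong)
qed

section \<open>The Ricci identity\<close>

text \<open>Covariant tensors are represented as functions of a list of indices; the
  covariant derivative corrects each slot p of l by a Christoffel term, written
  with the list update l[p := k]. Applying it twice produces sums over pairs of
  slots; the terms with two different slots are symmetric in the two
  connection coefficients and cancel in the commutator.\<close>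

definition cross_slot_sum :: "('n \<Rightarrow> 'n \<Rightarrow> real) \<Rightarrow> ('n \<Rightarrow> 'n \<Rightarrow> real) \<Rightarrow> ('n::finite list \<Rightarrow> real)
    \<Rightarrow> 'n list \<Rightarrow> real" where
  "cross_slot_sum A B T l = (\<Sum>p<length l. \<Sum>q<length l. if q = p then 0 else
      (\<Sum>k\<in>UNIV. \<Sum>j\<in>UNIV. A (l!p) k * (B (l!q) j * T (l[p := k, q := j]))))"

lemma cross_slot_sum_commute: "cross_slot_sum A B T l = cross_slot_sum B A T l"
proof -
  have "cross_slot_sum A B T l = (\<Sum>q<length l. \<Sum>p<length l. if q = p then 0 else
      (\<Sum>k\<in>UNIV. \<Sum>j\<in>UNIV. A (l!p) k * (B (l!q) j * T (l[p := k, q := j]))))"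
    unfolding cross_slot_sum_def by (rule sum.swap)
  also have "\<dots> = cross_slot_sum B A T l"
    unfolding cross_slot_sum_def
  proof (intro sum.cong refl)
    fix q p
    show "(if q = p then 0 else
        (\<Sum>k\<in>UNIV. \<Sum>j\<in>UNIV. A (l!p) k * (B (l!q) j * T (l[p := k, q := j]))))
      = (if p = q then 0 else
        (\<Sum>k\<in>UNIV. \<Sum>j\<in>UNIV. B (l!q) k * (A (l!p) j * T (l[q := k, p := j]))))"
    proof (cases "q = p")
      case False
      then have "\<And>k j. l[p := k, q := j] = l[q := j, p := k]" by (simp add: list_update_swap)
      then show ?thesis using False by (simp, subst sum.swap) (simp add: mult_ac)
    qed simp
  qed
  finally show ?thesis .
qed

lemma iterated_slot_sum:
  "(\<Sum>p<length l. \<Sum>k\<in>UNIV. A (l!p) k *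
      (\<Sum>q<length l. \<Sum>j\<in>UNIV. B (l[p := k] ! q) j * T (l[p := k, q := j])))
   = (\<Sum>p<length l. \<Sum>j\<in>UNIV. (\<Sum>k\<in>UNIV. A (l!p) k * B k j) * T (l[p := j]))
     + cross_slot_sum A B T l"
proof -
  have inner: "(\<Sum>q<length l. \<Sum>j\<in>UNIV. B (l[p := k] ! q) j * T (l[p := k, q := j]))
      = (\<Sum>j\<in>UNIV. B k j * T (l[p := j]))
        + (\<Sum>q<length l. if q = p then 0 else (\<Sum>j\<in>UNIV. B (l!q) j * T (l[p := k, q := j])))"
    if p: "p < length l" for p k
  proof -
    have "(\<Sum>q<length l. \<Sum>j\<in>UNIV. B (l[p := k] ! q) j * T (l[p := k, q := j]))
      = (\<Sum>q<length l. (if q = p then (\<Sum>j\<in>UNIV. B k j * T (l[p := j])) else 0)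
          + (if q = p then 0 else (\<Sum>j\<in>UNIV. B (l!q) j * T (l[p := k, q := j]))))"
      using p by (intro sum.cong) auto
    also have "\<dots> = (\<Sum>j\<in>UNIV. B k j * T (l[p := j]))
        + (\<Sum>q<length l. if q = p then 0 else (\<Sum>j\<in>UNIV. B (l!q) j * T (l[p := k, q := j])))"
      using p by (simp add: sum.distrib)
    finally show ?thesis .
  qed
  have "(\<Sum>p<length l. \<Sum>k\<in>UNIV. A (l!p) k *
      (\<Sum>q<length l. \<Sum>j\<in>UNIV. B (l[p := k] ! q) j * T (l[p := k, q := j])))
    = (\<Sum>p<length l. \<Sum>k\<in>UNIV. \<Sum>j\<in>UNIV. A (l!p) k * (B k j * T (l[p := j])))
      + (\<Sum>p<length l. \<Sum>k\<in>UNIV. \<Sum>q<length l. if q = p then 0 else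
          (\<Sum>j\<in>UNIV. A (l!p) k * (B (l!q) j * T (l[p := k, q := j]))))"
    by (simp add: inner distrib_left sum.distrib sum_distrib_left if_distrib cong: if_cong)
  also have "(\<Sum>p<length l. \<Sum>k\<in>UNIV. \<Sum>j\<in>UNIV. A (l!p) k * (B k j * T (l[p := j])))
      = (\<Sum>p<length l. \<Sum>j\<in>UNIV. (\<Sum>k\<in>UNIV. A (l!p) k * B k j) * T (l[p := j]))"
    by (rule sum.cong[OF refl], subst sum.swap) (simp add: sum_distrib_left sum_distrib_right mult_ac)
  also have "(\<Sum>p<length l. \<Sum>k\<in>UNIV. \<Sum>q<length l. if q = p then 0 else
          (\<Sum>j\<in>UNIV. A (l!p) k * (B (l!q) j * T (l[p := k, q := j]))))
      = cross_slot_sum A B T l"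
    unfolding cross_slot_sum_def
    by (rule sum.cong[OF refl], subst sum.swap, rule sum.cong[OF refl]) (simp split: if_split)
  finally show ?thesis .
qed

text \<open>The algebraic core of the Ricci identity. N a b l stands for the second
  covariant derivative, written out in terms of second partials PP, first partials
  PA, values TZ, Christoffel symbols Gm and their partials dG; A b l is the first
  covariant derivative. Symmetry of PP and of Gm leaves only the curvature term.\<close>

lemma commutator_of_second_derivatives:
  fixes PP :: "'n::finite \<Rightarrow> 'n \<Rightarrow> 'n list \<Rightarrow> real" and PA :: "'n \<Rightarrow> 'n list \<Rightarrow> real"
    and TZ :: "'n list \<Rightarrow> real" and Gm :: "'n \<Rightarrow> 'n \<Rightarrow> 'n \<Rightarrow> real"
    and dG :: "'n \<Rightarrow> 'n \<Rightarrow> 'n \<Rightarrow> 'n \<Rightarrow> real"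
  assumes PP_sym: "PP a b l = PP b a l"
    and Gm_sym: "\<And>a b k. Gm a b k = Gm b a k"
    and A_eq: "\<And>b l. A b l = PA b l - (\<Sum>p<length l. \<Sum>k\<in>UNIV. Gm b (l!p) k * TZ (l[p := k]))"
    and N_eq: "\<And>a b l. N a b l = PP a b l
        - (\<Sum>p<length l. \<Sum>k\<in>UNIV. dG a b (l!p) k * TZ (l[p := k]) + Gm b (l!p) k * PA a (l[p := k]))
        - ((\<Sum>k\<in>UNIV. Gm a b k * A k l) + (\<Sum>p<length l. \<Sum>k\<in>UNIV. Gm a (l!p) k * A b (l[p := k])))"
  shows "N a b l - N b a l = - (\<Sum>p<length l. \<Sum>j\<in>UNIV.
      (dG a b (l!p) j - dG b a (l!p) j - (\<Sum>k\<in>UNIV. Gm a (l!p) k * Gm b k j)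
        + (\<Sum>k\<in>UNIV. Gm a k j * Gm b (l!p) k)) * TZ (l[p := j]))"
proof -
  define X1 where "X1 a b = (\<Sum>p<length l. \<Sum>k\<in>UNIV. dG a b (l!p) k * TZ (l[p := k]))" for a b
  define X2 where "X2 a b = (\<Sum>p<length l. \<Sum>k\<in>UNIV. Gm b (l!p) k * PA a (l[p := k]))" for a b
  define X3 where "X3 a b = (\<Sum>k\<in>UNIV. Gm a b k * A k l)" for a b
  define D where "D a b = (\<Sum>p<length l. \<Sum>j\<in>UNIV. (\<Sum>k\<in>UNIV. Gm a (l!p) k * Gm b k j) * TZ (l[p := j]))"
    for a b
  have N: "N a b l = PP a b l - X1 a b - X2 a b - X3 a b - X2 b a
      + (D a b + cross_slot_sum (Gm a) (Gm b) TZ l)" for a b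
  proof -
    have "(\<Sum>p<length l. \<Sum>k\<in>UNIV. Gm a (l!p) k * A b (l[p := k]))
        = X2 b a - (D a b + cross_slot_sum (Gm a) (Gm b) TZ l)"
      unfolding X2_def D_def A_eq iterated_slot_sum[symmetric]
      by (simp add: right_diff_distrib sum_subtractf sum_distrib_left)
    then show ?thesis unfolding N_eq X1_def X2_def X3_def by (simp add: sum.distrib)
  qed
  have "X3 a b = X3 b a" unfolding X3_def using Gm_sym by simp
  moreover have "D b a = (\<Sum>p<length l. \<Sum>j\<in>UNIV. (\<Sum>k\<in>UNIV. Gm a k j * Gm b (l!p) k) * TZ (l[p := j]))"
    unfolding D_def by (simp add: mult.commute)
  ultimately show ?thesis
    using N[of a b] N[of b a] PP_sym cross_slot_sum_commute[of "Gm a" "Gm b" TZ l]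
    unfolding X1_def D_def by (simp add: algebra_simps sum.distrib sum_subtractf)
qed

lemma cov_deriv_Cons: "cov_deriv g T x (b # l) = partial b (\<lambda>y. T y l) x
   - (\<Sum>p<length l. \<Sum>k\<in>UNIV. christoffel g x b (l ! p) k * T x (l[p := k]))"
  unfolding cov_deriv_def by simp

lemma second_cov_deriv_expand:
  fixes g :: "real^'n::finite \<Rightarrow> real^'n^'n" and T :: "real^'n \<Rightarrow> 'n list \<Rightarrow> real"
  assumes Gd: "\<And>b c k. (\<lambda>y. christoffel g y b c k) differentiable (at x)"
    and Td: "\<And>l. (\<lambda>y. T y l) differentiable (at x)"
    and Pd: "\<And>b l. (\<lambda>y. partial b (\<lambda>y. T y l) y) differentiable (at x)"
  shows "cov_deriv g (cov_deriv g T) x (a # b # l) =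
     partial a (\<lambda>y. partial b (\<lambda>y. T y l) y) x
        - (\<Sum>p<length l. \<Sum>k\<in>UNIV. partial a (\<lambda>y. christoffel g y b (l!p) k) x * T x (l[p := k])
              + christoffel g x b (l!p) k * partial a (\<lambda>y. T y (l[p := k])) x)
        - ((\<Sum>k\<in>UNIV. christoffel g x a b k * cov_deriv g T x (k # l))
           + (\<Sum>p<length l. \<Sum>k\<in>UNIV. christoffel g x a (l!p) k * cov_deriv g T x (b # l[p := k])))"
proof -
  have d1: "(\<lambda>y. christoffel g y b (l ! p) k * T y (l[p := k])) differentiable (at x)" for p k
    using Gd Td by simp
  have d2: "(\<lambda>y. \<Sum>k\<in>UNIV. christoffel g y b (l ! p) k * T y (l[p := k])) differentiable (at x)" for p
    using d1 by simp
  have "partial a (\<lambda>y. \<Sum>p<length l. \<Sum>k\<in>UNIV. christoffel g y b (l ! p) k * T y (l[p := k])) x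
      = (\<Sum>p<length l. \<Sum>k\<in>UNIV. partial a (\<lambda>y. christoffel g y b (l ! p) k * T y (l[p := k])) x)"
    by (simp add: partial_sum d1 d2)
  also have "\<dots> = (\<Sum>p<length l. \<Sum>k\<in>UNIV. partial a (\<lambda>y. christoffel g y b (l!p) k) x * T x (l[p := k])
              + christoffel g x b (l!p) k * partial a (\<lambda>y. T y (l[p := k])) x)"
    by (simp add: partial_mult[OF Gd Td] add.commute)
  finally have corr: "partial a (\<lambda>y. \<Sum>p<length l. \<Sum>k\<in>UNIV. christoffel g y b (l ! p) k * T y (l[p := k])) x
      = (\<Sum>p<length l. \<Sum>k\<in>UNIV. partial a (\<lambda>y. christoffel g y b (l!p) k) x * T x (l[p := k])
              + christoffel g x b (l!p) k * partial a (\<lambda>y. T y (l[p := k])) x)" .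
  have "partial a (\<lambda>y. cov_deriv g T y (b # l)) x = partial a (\<lambda>y. partial b (\<lambda>y. T y l) y) x
      - partial a (\<lambda>y. \<Sum>p<length l. \<Sum>k\<in>UNIV. christoffel g y b (l ! p) k * T y (l[p := k])) x"
    unfolding cov_deriv_Cons using d2 by (intro partial_diff Pd) simp
  moreover have "(\<Sum>p<length (b # l). \<Sum>k\<in>UNIV. christoffel g x a ((b # l) ! p) k * cov_deriv g T x ((b # l)[p := k]))
     = (\<Sum>k\<in>UNIV. christoffel g x a b k * cov_deriv g T x (k # l))
           + (\<Sum>p<length l. \<Sum>k\<in>UNIV. christoffel g x a (l!p) k * cov_deriv g T x (b # l[p := k]))"
    by (simp del: sum.lessThan_Suc add: sum.lessThan_Suc_shift)
  ultimately show ?thesis unfolding cov_deriv_Cons[of g "cov_deriv g T" x a] corr by simp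
qed

theorem ricci_identity:
  fixes g :: "real^'n::finite \<Rightarrow> real^'n^'n" and T :: "real^'n \<Rightarrow> 'n list \<Rightarrow> real"
  assumes Gd: "\<And>b c k. (\<lambda>y. christoffel g y b c k) differentiable (at x)"
    and Td: "\<And>l. (\<lambda>y. T y l) differentiable (at x)"
    and Pd: "\<And>b l. (\<lambda>y. partial b (\<lambda>y. T y l) y) differentiable (at x)"
    and P2_sym: "\<And>a b l. partial a (\<lambda>y. partial b (\<lambda>y. T y l) y) x = partial b (\<lambda>y. partial a (\<lambda>y. T y l) y) x"
    and G_sym: "\<And>a b k. christoffel g x a b k = christoffel g x b a k"
  shows "cov_deriv g (cov_deriv g T) x (a # b # l) - cov_deriv g (cov_deriv g T) x (b # a # l)
    = - (\<Sum>p<length l. \<Sum>j\<in>UNIV. Rup g x a b (l!p) j * T x (l[p := j]))"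
  unfolding Rup_def
  by (rule commutator_of_second_derivatives[where PP = "\<lambda>a b l. partial a (\<lambda>y. partial b (\<lambda>y. T y l) y) x"
        and PA = "\<lambda>b l. partial b (\<lambda>y. T y l) x" and TZ = "T x" and Gm = "christoffel g x"
        and dG = "\<lambda>a b c k. partial a (\<lambda>y. christoffel g y b c k) x"
        and A = "\<lambda>b l. cov_deriv g T x (b # l)"
        and N = "\<lambda>a b l. cov_deriv g (cov_deriv g T) x (a # b # l)"])
    (rule P2_sym, rule G_sym, rule cov_deriv_Cons, rule second_cov_deriv_expand[OF Gd Td Pd])

section \<open>Algebraic curvature tensors with R \<cdot> R = 0\<close>

definition ricci_contraction :: "('n::finite \<Rightarrow> 'n \<Rightarrow> 'n \<Rightarrow> 'n \<Rightarrow> real) \<Rightarrow> 'n \<Rightarrow> 'n \<Rightarrow> real"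
  where "ricci_contraction R x y = (\<Sum>b\<in>UNIV. R x b y b)"

text \<open>At a single point the curvature is an array R a b c d = R_{abc}^d together
  with the metric G, its inverse Gi and the lowered tensor L = R_{abcd}. The
  assumptions are the skew-symmetries, the first Bianchi identity, and the
  algebraic semisymmetry condition: each curvature operator R_{ab}, acting as a
  derivation, annihilates the (0,4) tensor L.\<close>

locale semisymmetric_curvature =
  fixes R :: "'n::finite \<Rightarrow> 'n \<Rightarrow> 'n \<Rightarrow> 'n \<Rightarrow> real"
    and L :: "'n \<Rightarrow> 'n \<Rightarrow> 'n \<Rightarrow> 'n \<Rightarrow> real"
    and G Gi :: "'n \<Rightarrow> 'n \<Rightarrow> real"
  assumes R_antisym: "R a b c d = - R b a c d"
    and R_bianchi: "R a b c d + R b c a d + R c a b d = 0"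
    and G_sym: "G i j = G j i"
    and G_Gi: "(\<Sum>k\<in>UNIV. G i k * Gi k j) = (if i = j then 1 else 0)"
    and L_def: "L a b c d = (\<Sum>e\<in>UNIV. R a b c e * G e d)"
    and L_antisym2: "L a b c d = - L a b d c"
    and semisym: "(\<Sum>m\<in>UNIV. R a b c m * L m d e f + R a b d m * L c m e f
                 + R a b e m * L c d m f + R a b f m * L c d e m) = 0"
begin

lemma L_antisym1: "L a b c d = - L b a c d"
  unfolding L_def by (subst R_antisym) (simp add: sum_negf)

lemma L_bianchi: "L a b c d + L b c a d + L c a b d = 0"
proof -
  have "L a b c d + L b c a d + L c a b d = (\<Sum>e\<in>UNIV. (R a b c e + R b c a e + R c a b e) * G e d)"
    unfolding L_def by (simp add: sum.distrib algebra_simps)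
  also have "\<dots> = 0" by (simp add: R_bianchi)
  finally show ?thesis .
qed

lemma L_pair_sym: "L a b c d = L c d a b"
proof -
  have 1: "L a b c d + L b c a d + L c a b d = 0" by (rule L_bianchi)
  have 2: "L b c d a + L c d b a + L d b c a = 0" by (rule L_bianchi)
  have 3: "L c d a b + L d a c b + L a c d b = 0" by (rule L_bianchi)
  have 4: "L d a b c + L a b d c + L b d a c = 0" by (rule L_bianchi)
  note A = L_antisym1 L_antisym2
  show ?thesis using 1 2 3 4
      A[of a b c d] A[of b c a d] A[of c a b d] A[of b c d a] A[of c d b a] A[of d b c a]
      A[of c d a b] A[of d a c b] A[of a c d b] A[of d a b c] A[of a b d c] A[of b d a c]
      L_antisym1[of b c d a] L_antisym2[of c b d a] L_antisym1[of c a d b] L_antisym2[of a c d b]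
      L_antisym1[of d b a c] L_antisym2[of b d a c] L_antisym1[of d a b c]
    by linarith
qed


text \<open>The full contraction RR x y z p q r = R_{xyz}^m R_{pqrm}. All quadratic
  expressions below are rewritten in terms of RR, whose symmetries are inherited
  from those of R and L.\<close>

definition RR :: "'n \<Rightarrow> 'n \<Rightarrow> 'n \<Rightarrow> 'n \<Rightarrow> 'n \<Rightarrow> 'n \<Rightarrow> real" where
  "RR x y z p q r = (\<Sum>m\<in>UNIV. R x y z m * L p q r m)"

lemma RR_antisym: "RR x y z p q r = - RR y x z p q r"
  unfolding RR_def by (subst R_antisym) (simp add: sum_negf)

lemma RR_bianchi: "RR x y z p q r + RR y z x p q r + RR z x y p q r = 0"
proof -
  have "RR x y z p q r + RR y z x p q r + RR z x y p q r
      = (\<Sum>m\<in>UNIV. (R x y z m + R y z x m + R z x y m) * L p q r m)"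
    unfolding RR_def by (simp add: sum.distrib algebra_simps)
  also have "\<dots> = 0" by (simp add: R_bianchi)
  finally show ?thesis .
qed

lemma RR_swap: "RR x y z p q r = RR p q r x y z"
proof -
  have "RR x y z p q r = (\<Sum>m\<in>UNIV. \<Sum>e\<in>UNIV. R x y z m * R p q r e * G e m)"
    unfolding RR_def L_def by (simp add: sum_distrib_left mult.assoc)
  also have "\<dots> = (\<Sum>e\<in>UNIV. \<Sum>m\<in>UNIV. R x y z m * R p q r e * G e m)"
    by (rule sum.swap)
  also have "\<dots> = RR p q r x y z"
    unfolding RR_def L_def by (simp add: sum_distrib_left mult.assoc mult.commute mult.left_commute G_sym)
  finally show ?thesis .
qed

lemma RR_slot1: "(\<Sum>m\<in>UNIV. R x y z m * L m q r s) = - RR x y z r s q"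
  unfolding RR_def
  by (simp add: sum_negf[symmetric], rule sum.cong, simp, metis L_pair_sym L_antisym2 mult_minus_right)

lemma RR_slot2: "(\<Sum>m\<in>UNIV. R x y z m * L q m r s) = RR x y z r s q"
  unfolding RR_def by (rule sum.cong, simp, metis L_pair_sym)

lemma RR_slot3: "(\<Sum>m\<in>UNIV. R x y z m * L q r m s) = - RR x y z q r s"
  unfolding RR_def
  by (simp add: sum_negf[symmetric], rule sum.cong, simp, metis L_antisym2 mult_minus_right)

lemma RR_slot3_commuted: "(\<Sum>m\<in>UNIV. L p q m s * R x y z m) = - RR x y z p q s"
  unfolding RR_def
  by (simp add: sum_negf[symmetric], rule sum.cong, simp, metis L_antisym2 mult_minus_right mult.commute)

lemma semisym_RR: "- RR a b c e f d + RR a b d e f c - RR a b e c d f + RR a b f c d e = 0"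
proof -
  have "(\<Sum>m\<in>UNIV. R a b c m * L m d e f) + (\<Sum>m\<in>UNIV. R a b d m * L c m e f)
      + (\<Sum>m\<in>UNIV. R a b e m * L c d m f) + (\<Sum>m\<in>UNIV. R a b f m * L c d e m) = 0"
    using semisym[of a b c d e f] by (simp add: sum.distrib)
  then show ?thesis by (simp add: RR_slot1 RR_slot2 RR_slot3 RR_def[symmetric])
qed

lemma lower_first: "(\<Sum>f\<in>UNIV. (\<Sum>m\<in>UNIV. P m * R (p m) (q m) (r m) f) * G f f') = (\<Sum>m\<in>UNIV. P m * L (p m) (q m) (r m) f')"
proof -
  have "(\<Sum>f\<in>UNIV. (\<Sum>m\<in>UNIV. P m * R (p m) (q m) (r m) f) * G f f')
      = (\<Sum>f\<in>UNIV. \<Sum>m\<in>UNIV. P m * (R (p m) (q m) (r m) f * G f f'))"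
    by (simp add: sum_distrib_right mult.assoc)
  also have "\<dots> = (\<Sum>m\<in>UNIV. \<Sum>f\<in>UNIV. P m * (R (p m) (q m) (r m) f * G f f'))" by (rule sum.swap)
  also have "\<dots> = (\<Sum>m\<in>UNIV. P m * L (p m) (q m) (r m) f')" by (simp add: L_def sum_distrib_left)
  finally show ?thesis .
qed

lemma lower_last: "(\<Sum>f\<in>UNIV. (\<Sum>m\<in>UNIV. R p q m f * P m) * G f f') = (\<Sum>m\<in>UNIV. L p q m f' * P m)"
proof -
  have "(\<Sum>f\<in>UNIV. (\<Sum>m\<in>UNIV. R p q m f * P m) * G f f')
      = (\<Sum>f\<in>UNIV. \<Sum>m\<in>UNIV. P m * (R p q m f * G f f'))"
    by (simp add: sum_distrib_left sum_distrib_right mult_ac)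
  also have "\<dots> = (\<Sum>m\<in>UNIV. \<Sum>f\<in>UNIV. P m * (R p q m f * G f f'))" by (rule sum.swap)
  also have "\<dots> = (\<Sum>m\<in>UNIV. L p q m f' * P m)" by (simp add: L_def sum_distrib_left mult.commute)
  finally show ?thesis .
qed

lemma eq_zero_by_lowering:
  assumes "\<And>f'. (\<Sum>f\<in>UNIV. X f * G f f') = 0"
  shows "X f = 0"
proof -
  have e: "\<And>f''. X f'' * (if f'' = f then 1 else 0) = (if f'' = f then X f else 0)" by simp
  have "X f = (\<Sum>f''\<in>UNIV. X f'' * (if f'' = f then 1 else 0))" by (simp only: e sum.delta) simp
  also have "\<dots> = (\<Sum>f''\<in>UNIV. \<Sum>f'\<in>UNIV. X f'' * G f'' f' * Gi f' f)"
    by (simp add: G_Gi[symmetric] sum_distrib_left mult.assoc)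
  also have "\<dots> = (\<Sum>f'\<in>UNIV. (\<Sum>f''\<in>UNIV. X f'' * G f'' f') * Gi f' f)"
    by (subst sum.swap) (simp add: sum_distrib_right)
  also have "\<dots> = 0" by (simp add: assms)
  finally show ?thesis .
qed

text \<open>The first identity of the theorem: after lowering the index f it is a
  linear combination of instances of the semisymmetry condition, Bianchi and
  the symmetries of RR.\<close>

theorem curvature_quadratic_identity:
  "(\<Sum>m\<in>UNIV. R a b c m * R d m e f + R b c d m * R a m e f
       + R c d a m * R b m e f + R d a b m * R c m e f
       - R a c e m * R b d m f + R a c m f * R b d e m) = 0"
proof -
  define X where "X f = (\<Sum>m\<in>UNIV. R a b c m * R d m e f + R b c d m * R a m e f
       + R c d a m * R b m e f + R d a b m * R c m e f
       - R a c e m * R b d m f + R a c m f * R b d e m)" for f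
  have "(\<Sum>f\<in>UNIV. X f * G f f') = 0" for f'
  proof -
    have "(\<Sum>f\<in>UNIV. X f * G f f')
       = (\<Sum>f\<in>UNIV. (\<Sum>m\<in>UNIV. R a b c m * R d m e f) * G f f')
         + (\<Sum>f\<in>UNIV. (\<Sum>m\<in>UNIV. R b c d m * R a m e f) * G f f')
         + (\<Sum>f\<in>UNIV. (\<Sum>m\<in>UNIV. R c d a m * R b m e f) * G f f')
         + (\<Sum>f\<in>UNIV. (\<Sum>m\<in>UNIV. R d a b m * R c m e f) * G f f')
         - (\<Sum>f\<in>UNIV. (\<Sum>m\<in>UNIV. R a c e m * R b d m f) * G f f')
         + (\<Sum>f\<in>UNIV. (\<Sum>m\<in>UNIV. R a c m f * R b d e m) * G f f')"
      unfolding X_def by (simp only: sum.distrib sum_subtractf distrib_right left_diff_distrib)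
    also have "\<dots> = RR a b c e f' d + RR b c d e f' a + RR c d a e f' b + RR d a b e f' c
        + RR a c e b d f' - RR b d e a c f'"
      unfolding lower_first[where P="R _ _ _"] lower_last
      by (simp only: RR_slot1 RR_slot2 RR_slot3 RR_slot3_commuted)
    also have "\<dots> = 0"
      using semisym_RR[of b c a e f' d] semisym_RR[of a c b e f' d] semisym_RR[of a d b e f' c]
        RR_bianchi[of a c d e f' b] RR_antisym[of a d c e f' b] RR_swap[of a d f' b c e]
        RR_antisym[of a c b e f' d] RR_bianchi[of a b c e f' d] RR_swap[of a d e b c f']
        RR_antisym[of a d b e f' c] RR_swap[of b d e a c f']
      by linarith
    finally show ?thesis .
  qed
  then show ?thesis using eq_zero_by_lowering[of X f] unfolding X_def by blast
qed

lemma Gi_sym: "Gi i j = Gi j i"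
proof -
  have g: "\<And>k. (\<Sum>l\<in>UNIV. G l k * Gi l j) = (if k = j then 1 else 0)"
  proof -
    fix k
    have "(\<Sum>l\<in>UNIV. G l k * Gi l j) = (\<Sum>l\<in>UNIV. G k l * Gi l j)"
      by (rule sum.cong) (auto simp: G_sym[of _ k])
    then show "(\<Sum>l\<in>UNIV. G l k * Gi l j) = (if k = j then 1 else 0)" using G_Gi[of k j] by simp
  qed
  have "(\<Sum>k\<in>UNIV. \<Sum>l\<in>UNIV. Gi k i * G l k * Gi l j) = (\<Sum>l\<in>UNIV. Gi l j * (\<Sum>k\<in>UNIV. G l k * Gi k i))"
    by (subst sum.swap) (simp add: sum_distrib_left mult_ac)
  also have "\<dots> = Gi i j" by (simp add: G_Gi if_distrib cong: if_cong)
  finally have 1: "(\<Sum>k\<in>UNIV. \<Sum>l\<in>UNIV. Gi k i * G l k * Gi l j) = Gi i j" .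
  have "(\<Sum>k\<in>UNIV. \<Sum>l\<in>UNIV. Gi k i * G l k * Gi l j) = (\<Sum>k\<in>UNIV. Gi k i * (\<Sum>l\<in>UNIV. G l k * Gi l j))"
    by (simp add: sum_distrib_left mult_ac)
  also have "\<dots> = Gi j i" by (simp add: g if_distrib cong: if_cong)
  finally show ?thesis using 1 by simp
qed

lemma raise_L: "R x y z w = (\<Sum>f\<in>UNIV. L x y z f * Gi f w)"
proof -
  have "(\<Sum>f\<in>UNIV. L x y z f * Gi f w) = (\<Sum>f\<in>UNIV. \<Sum>e\<in>UNIV. R x y z e * (G e f * Gi f w))"
    by (simp add: L_def sum_distrib_right sum_distrib_left mult_ac)
  also have "\<dots> = (\<Sum>e\<in>UNIV. R x y z e * (\<Sum>f\<in>UNIV. G e f * Gi f w))"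
    by (subst sum.swap) (simp add: sum_distrib_left)
  also have "\<dots> = R x y z w" by (simp add: G_Gi if_distrib cong: if_cong)
  finally show ?thesis by simp
qed

abbreviation ric :: "'n \<Rightarrow> 'n \<Rightarrow> real" where
  "ric \<equiv> ricci_contraction R"

lemma ric_sym: "ric x y = ric y x"
proof -
  have "ric x y = (\<Sum>b\<in>UNIV. \<Sum>f\<in>UNIV. L y f x b * Gi f b)"
    unfolding ricci_contraction_def by (subst raise_L) (simp add: L_pair_sym[of x _ y])
  also have "\<dots> = (\<Sum>f\<in>UNIV. \<Sum>b\<in>UNIV. L y f x b * Gi b f)"
    by (subst sum.swap) (simp add: Gi_sym)
  also have "\<dots> = ric y x"
    unfolding ricci_contraction_def by (subst raise_L) simp
  finally show ?thesis .
qed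

lemma semisym_raised:
  "(\<Sum>m\<in>UNIV. R a b c m * R m d e f + R a b d m * R c m e f
       + R a b e m * R c d m f - R a b m f * R c d e m) = 0"
proof -
  define X where "X f = (\<Sum>m\<in>UNIV. R a b c m * R m d e f + R a b d m * R c m e f
       + R a b e m * R c d m f - R a b m f * R c d e m)" for f
  have "(\<Sum>f\<in>UNIV. X f * G f f') = 0" for f'
  proof -
    have "(\<Sum>f\<in>UNIV. X f * G f f')
       = (\<Sum>f\<in>UNIV. (\<Sum>m\<in>UNIV. R a b c m * R m d e f) * G f f')
         + (\<Sum>f\<in>UNIV. (\<Sum>m\<in>UNIV. R a b d m * R c m e f) * G f f')
         + (\<Sum>f\<in>UNIV. (\<Sum>m\<in>UNIV. R a b e m * R c d m f) * G f f')
         - (\<Sum>f\<in>UNIV. (\<Sum>m\<in>UNIV. R a b m f * R c d e m) * G f f')"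
      unfolding X_def by (simp only: sum.distrib sum_subtractf distrib_right left_diff_distrib)
    also have "\<dots> = (\<Sum>m\<in>UNIV. R a b c m * L m d e f') + (\<Sum>m\<in>UNIV. R a b d m * L c m e f')
         + (\<Sum>m\<in>UNIV. R a b e m * L c d m f') - (\<Sum>m\<in>UNIV. L a b m f' * R c d e m)"
      unfolding lower_first[where P="R _ _ _"] lower_last by (rule refl)
    also have "\<dots> = (\<Sum>m\<in>UNIV. R a b c m * L m d e f') + (\<Sum>m\<in>UNIV. R a b d m * L c m e f')
         + (\<Sum>m\<in>UNIV. R a b e m * L c d m f') + (\<Sum>m\<in>UNIV. R a b f' m * L c d e m)"
      unfolding RR_slot3_commuted using RR_swap[of c d e a b f'] by (simp add: RR_def)
    also have "\<dots> = 0" using semisym[of a b c d e f'] by (simp add: sum.distrib)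
    finally show ?thesis .
  qed
  then show ?thesis using eq_zero_by_lowering[of X f] unfolding X_def by blast
qed

lemma semisym_traced: "(\<Sum>m\<in>UNIV. R a b c m * ric m e) + (\<Sum>m\<in>UNIV. R a b e m * ric c m) = 0"
proof -
  have 0: "(\<Sum>d\<in>UNIV. \<Sum>m\<in>UNIV. R a b c m * R m d e d + R a b d m * R c m e d
                 + R a b e m * R c d m d - R a b m d * R c d e m) = 0"
    using semisym_raised by simp
  have 1: "(\<Sum>d\<in>UNIV. \<Sum>m\<in>UNIV. R a b c m * R m d e d) = (\<Sum>m\<in>UNIV. R a b c m * ric m e)"
    by (subst sum.swap) (simp add: ricci_contraction_def sum_distrib_left)
  have 2: "(\<Sum>d\<in>UNIV. \<Sum>m\<in>UNIV. R a b e m * R c d m d) = (\<Sum>m\<in>UNIV. R a b e m * ric c m)"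
    by (subst sum.swap) (simp add: ricci_contraction_def sum_distrib_left)
  have 3: "(\<Sum>d\<in>UNIV. \<Sum>m\<in>UNIV. R a b m d * R c d e m) = (\<Sum>d\<in>UNIV. \<Sum>m\<in>UNIV. R a b d m * R c m e d)"
    by (rule sum.swap)
  show ?thesis using 0 1 2 3 by (simp add: sum.distrib sum_subtractf)
qed

text \<open>The contraction ricR w x y z = R_{wm} R_{xyz}^m; the traced
  semisymmetry condition says it is skew in w and z.\<close>

definition ricR :: "'n \<Rightarrow> 'n \<Rightarrow> 'n \<Rightarrow> 'n \<Rightarrow> real" where
  "ricR w x y z = (\<Sum>m\<in>UNIV. ric w m * R x y z m)"

lemma ricR_skew: "ricR w x y z + ricR z x y w = 0"
  using semisym_traced[of x y z w] unfolding ricR_def by (simp add: ric_sym mult.commute)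

lemma ricR_bianchi: "ricR w x y z + ricR w y z x + ricR w z x y = 0"
proof -
  have "ricR w x y z + ricR w y z x + ricR w z x y = (\<Sum>m\<in>UNIV. ric w m * (R x y z m + R y z x m + R z x y m))"
    unfolding ricR_def by (simp add: sum.distrib algebra_simps)
  also have "\<dots> = 0" by (simp add: R_bianchi)
  finally show ?thesis .
qed

theorem ric_curvature_cyclic: "(\<Sum>m\<in>UNIV. ric a m * R b c e m + ric b m * R c a e m + ric c m * R a b e m) = 0"
proof -
  have "(\<Sum>m\<in>UNIV. ric a m * R b c e m + ric b m * R c a e m + ric c m * R a b e m)
     = ricR a b c e + ricR b c a e + ricR c a b e" unfolding ricR_def by (simp add: sum.distrib)
  also have "\<dots> = 0" using ricR_skew[of b c a e] ricR_skew[of c a b e] ricR_skew[of a b c e] ricR_bianchi[of e a b c]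
    by linarith
  finally show ?thesis .
qed

theorem ric_curvature_four_term: "(\<Sum>m\<in>UNIV. ric a m * R b e c m - ric b m * R a c e m
       + ric c m * R e b a m - ric e m * R c a b m) = 0"
proof -
  have "(\<Sum>m\<in>UNIV. ric a m * R b e c m - ric b m * R a c e m
       + ric c m * R e b a m - ric e m * R c a b m)
     = ricR a b e c - ricR b a c e + ricR c e b a - ricR e c a b" unfolding ricR_def by (simp add: sum.distrib sum_subtractf)
  also have "\<dots> = 0" using ricR_skew[of a b e c] ricR_skew[of a c e b] ricR_skew[of b e a c] ricR_skew[of c a b e]
      ricR_skew[of a b c e] ricR_skew[of a e b c] ricR_bianchi[of c a b e] ricR_bianchi[of b a c e] ricR_bianchi[of a b c e]
      ricR_bianchi[of e a b c]
    by linarith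
  finally show ?thesis .
qed

end


section \<open>The Levi-Civita curvature of a semisymmetric metric\<close>

lemma Rup_antisym: "Rup g x a b c d = - Rup g x b a c d"
  unfolding Rup_def by (simp add: mult.commute)

text \<open>Contracting the inverse metric in the Christoffel symbols against the
  metric; this is the computation behind metric compatibility.\<close>

lemma contract_with_inverse:
  fixes Gi G :: "'n::finite \<Rightarrow> 'n \<Rightarrow> real"
  assumes "\<And>e. (\<Sum>k\<in>UNIV. Gi k e * G k d) = (if e = d then 1 else 0)"
  shows "(\<Sum>k\<in>UNIV. (c * (\<Sum>e\<in>UNIV. Gi k e * X e)) * G k d) = c * X d"
proof -
  have "(\<Sum>k\<in>UNIV. (c * (\<Sum>e\<in>UNIV. Gi k e * X e)) * G k d) = (\<Sum>k\<in>UNIV. \<Sum>e\<in>UNIV. c * X e * (Gi k e * G k d))"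
    by (simp add: sum_distrib_left sum_distrib_right mult_ac)
  also have "\<dots> = (\<Sum>e\<in>UNIV. \<Sum>k\<in>UNIV. c * X e * (Gi k e * G k d))" by (rule sum.swap)
  also have "\<dots> = c * (\<Sum>e\<in>UNIV. X e * (\<Sum>k\<in>UNIV. Gi k e * G k d))"
    by (simp add: sum_distrib_left mult_ac)
  also have "\<dots> = c * (\<Sum>e\<in>UNIV. (if e = d then X d else 0))"
    by (intro arg_cong[where f="\<lambda>t. c * t"] sum.cong refl) (simp add: assms)
  also have "\<dots> = c * X d" by simp
  finally show ?thesis .
qed

locale metric_chart =
  fixes U :: "(real^'n::finite) set" and g :: "real^'n \<Rightarrow> real^'n^'n"
  assumes metric: "riemannian_metric_on U g"
begin

lemma chart_open: "open U" using metric unfolding riemannian_metric_on_def by blast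

lemma metric_smooth: "smooth_on U (\<lambda>y. g y $ i $ j)" using metric unfolding riemannian_metric_on_def by blast

lemma metric_sym: assumes "y \<in> U" shows "g y $ i $ j = g y $ j $ i"
proof -
  have t: "transpose (g y) = g y" using metric assms unfolding riemannian_metric_on_def by blast
  have "g y $ i $ j = transpose (g y) $ i $ j" by (simp only: t)
  also have "\<dots> = g y $ j $ i" by (simp add: transpose_def)
  finally show ?thesis .
qed

lemma metric_invertible: "y \<in> U \<Longrightarrow> invertible (g y)"
  using metric positive_definite_invertible unfolding riemannian_metric_on_def by blast

lemma metric_ginv: "y \<in> U \<Longrightarrow> (\<Sum>k\<in>UNIV. g y $ i $ k * ginv g y k j) = (if i = j then 1 else 0)"
  unfolding ginv_def using matrix_inv_contract[OF metric_invertible] by blast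

text \<open>By Cramer's rule the inverse metric is a quotient of determinants and hence
  smooth; consequently Christoffel symbols and curvature are smooth.\<close>

lemma ginv_smooth: "smooth_on U (\<lambda>y. ginv g y i j)"
proof (rule smooth_on_local[OF chart_open])
  let ?M = "\<lambda>y. (\<chi> r s. if s = i then (if r = j then 1 else 0) else g y $ r $ s) :: real^'n^'n"
  have m: "smooth_on U (\<lambda>y. ?M y $ r $ s)" for r s
    by (cases "s = i") (simp_all add: metric_smooth smooth_on_const[OF chart_open])
  show "smooth_on U (\<lambda>y. det (?M y) / det (g y))"
    using smooth_on_divide[OF chart_open smooth_on_det[OF chart_open m] smooth_on_det[OF chart_open metric_smooth]]
      metric_invertible invertible_det_nz by blast
  show "\<And>y. y \<in> U \<Longrightarrow> det (?M y) / det (g y) = ginv g y i j"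
    unfolding ginv_def using matrix_inv_cramer[OF metric_invertible] by simp
qed

lemmas smooth_intros = smooth_on_add[OF chart_open] smooth_on_diff[OF chart_open] smooth_on_mult[OF chart_open]
  smooth_on_sum[OF chart_open finite_class.finite_UNIV] smooth_on_partial smooth_on_const[OF chart_open] metric_smooth ginv_smooth

lemma christoffel_smooth: "smooth_on U (\<lambda>y. christoffel g y a b c)"
  unfolding christoffel_def by (intro smooth_intros)

lemma Rup_smooth: "smooth_on U (\<lambda>y. Rup g y a b c d)"
  unfolding Rup_def by (intro smooth_intros christoffel_smooth)

lemma Rdown_smooth: "smooth_on U (\<lambda>y. Rdown g y a b c d)"
  unfolding Rdown_def by (intro smooth_intros Rup_smooth)

lemma partial_metric_sym: "y \<in> U \<Longrightarrow> partial e (\<lambda>y. g y $ a $ b) y = partial e (\<lambda>y. g y $ b $ a) y"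
  by (rule partial_local[OF chart_open]) (auto simp: metric_sym)

lemma christoffel_sym: "y \<in> U \<Longrightarrow> christoffel g y a b c = christoffel g y b a c"
  unfolding christoffel_def using partial_metric_sym[of y _ a b] by (simp add: algebra_simps)

lemma partial_christoffel_sym: "y \<in> U \<Longrightarrow> partial e (\<lambda>y. christoffel g y a b c) y = partial e (\<lambda>y. christoffel g y b a c) y"
  by (rule partial_local[OF chart_open]) (auto simp: christoffel_sym)

lemma metric_parallel3:
  assumes y: "y \<in> U"
  shows "cov_deriv g (\<lambda>y l. g y $ (l!0) $ (l!1)) y [b, c, d] = 0"
proof -
  have inv: "\<And>e d. (\<Sum>k\<in>UNIV. ginv g y k e * g y $ k $ d) = (if e = d then 1 else 0)"
  proof -
    fix e d
    have "(\<Sum>k\<in>UNIV. ginv g y k e * g y $ k $ d) = (\<Sum>k\<in>UNIV. g y $ d $ k * ginv g y k e)"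
      by (rule sum.cong) (auto simp: metric_sym[OF y, of _ d])
    then show "(\<Sum>k\<in>UNIV. ginv g y k e * g y $ k $ d) = (if e = d then 1 else 0)"
      using metric_ginv[OF y, of d e] by auto
  qed
  have S1: "(\<Sum>k\<in>UNIV. christoffel g y b c k * g y $ k $ d) = 1/2 * (partial b (\<lambda>y. g y $ c $ d) y
     + partial c (\<lambda>y. g y $ b $ d) y - partial d (\<lambda>y. g y $ b $ c) y)"
    unfolding christoffel_def by (rule contract_with_inverse[OF inv])
  have "(\<Sum>k\<in>UNIV. christoffel g y b d k * g y $ c $ k) = (\<Sum>k\<in>UNIV. christoffel g y b d k * g y $ k $ c)"
    by (rule sum.cong) (auto simp: metric_sym[OF y, of c])
  also have "\<dots> = 1/2 * (partial b (\<lambda>y. g y $ d $ c) y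
     + partial d (\<lambda>y. g y $ b $ c) y - partial c (\<lambda>y. g y $ b $ d) y)"
    unfolding christoffel_def by (rule contract_with_inverse[OF inv])
  finally have S2: "(\<Sum>k\<in>UNIV. christoffel g y b d k * g y $ c $ k) = 1/2 * (partial b (\<lambda>y. g y $ d $ c) y
     + partial d (\<lambda>y. g y $ b $ c) y - partial c (\<lambda>y. g y $ b $ d) y)" .
  have "cov_deriv g (\<lambda>y l. g y $ (l!0) $ (l!1)) y [b, c, d] = partial b (\<lambda>y. g y $ c $ d) y
     - ((\<Sum>k\<in>UNIV. christoffel g y b c k * g y $ k $ d) + (\<Sum>k\<in>UNIV. christoffel g y b d k * g y $ c $ k))"
    by (simp add: cov_deriv_Cons numeral_2_eq_2)
  then show ?thesis using S1 S2 partial_metric_sym[OF y, of b d c] by (simp add: field_simps)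
qed

lemma metric_parallel:
  assumes "y \<in> U" "length l = 3"
  shows "cov_deriv g (\<lambda>y l. g y $ (l!0) $ (l!1)) y l = 0"
proof -
  obtain b c d where "l = [b, c, d]" using assms(2)
    by (metis (no_types, lifting) length_0_conv length_Suc_conv numeral_3_eq_3)
  then show ?thesis using metric_parallel3[OF assms(1)] by simp
qed


text \<open>The Ricci identity applies to every smooth covariant tensor field, since
  the Christoffel symbols are symmetric and second partials commute.\<close>

lemma ricci_identity_smooth:
  assumes T: "\<And>l. smooth_on U (\<lambda>y. T y l)" and x: "x \<in> U"
  shows "cov_deriv g (cov_deriv g T) x (a # b # l) - cov_deriv g (cov_deriv g T) x (b # a # l)
    = - (\<Sum>p<length l. \<Sum>j\<in>UNIV. Rup g x a b (l!p) j * T x (l[p := j]))"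
  by (rule ricci_identity[OF smooth_on_differentiable[OF christoffel_smooth x]
        smooth_on_differentiable[OF T x] smooth_on_differentiable[OF smooth_on_partial[OF T] x]
        partial_commute[OF chart_open T x] christoffel_sym[OF x]])

text \<open>Skew-symmetry of R_{abcd} in its last pair: the Ricci identity applied to
  the parallel metric.\<close>

lemma Rdown_antisym:
  assumes x: "x \<in> U"
  shows "Rdown g x a b c d = - Rdown g x a b d c"
proof -
  let ?Tg = "\<lambda>y (l::'n list). g y $ (l!0) $ (l!1)"
  have RI: "cov_deriv g (cov_deriv g ?Tg) x (a # b # [c, d]) - cov_deriv g (cov_deriv g ?Tg) x (b # a # [c, d])
    = - (\<Sum>p<length [c, d]. \<Sum>j\<in>UNIV. Rup g x a b ([c, d]!p) j * ?Tg x ([c, d][p := j]))"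
    by (rule ricci_identity_smooth[OF metric_smooth x])
  have zero: "cov_deriv g (cov_deriv g ?Tg) x (e # l) = 0" if l: "length l = 3" for e l
  proof -
    have "partial e (\<lambda>y. cov_deriv g ?Tg y l) x = partial e (\<lambda>y. 0) x"
      by (rule partial_local[OF chart_open x], rule metric_parallel[OF _ l])
    moreover have "cov_deriv g ?Tg x (l[p := k]) = 0" for p k
      by (rule metric_parallel[OF x]) (simp add: l)
    ultimately show ?thesis by (simp add: cov_deriv_Cons partial_const)
  qed
  have "0 = - ((\<Sum>j\<in>UNIV. Rup g x a b c j * g x $ j $ d) + (\<Sum>j\<in>UNIV. Rup g x a b d j * g x $ c $ j))"
    using RI zero[of "[b, c, d]" a] zero[of "[a, c, d]" b] by (simp add: numeral_2_eq_2)
  moreover have "(\<Sum>j\<in>UNIV. Rup g x a b d j * g x $ c $ j) = Rdown g x a b d c"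
    unfolding Rdown_def by (rule sum.cong) (auto simp: metric_sym[OF x, of c])
  ultimately show ?thesis unfolding Rdown_def by simp
qed

text \<open>The first Bianchi identity, from the symmetry of the Christoffel symbols
  and of their partial derivatives.\<close>

lemma Rup_bianchi:
  assumes x: "x \<in> U"
  shows "Rup g x a b c d + Rup g x b c a d + Rup g x c a b d = 0"
  unfolding Rup_def using christoffel_sym[OF x] partial_christoffel_sym[OF x] by (simp add: mult.commute)

text \<open>Semisymmetry of g, read through the Ricci identity, is the algebraic
  condition R \<cdot> R = 0 at each point.\<close>

lemma semisymmetry_condition:
  assumes ss: "semisymmetric_on U g" and x: "x \<in> U"
  shows "(\<Sum>m\<in>UNIV. Rup g x a b c m * Rdown g x m d e f + Rup g x a b d m * Rdown g x c m e f
                 + Rup g x a b e m * Rdown g x c d m f + Rup g x a b f m * Rdown g x c d e m) = 0"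
proof -
  let ?T = "\<lambda>y (l::'n list). Rdown g y (l!0) (l!1) (l!2) (l!3)"
  have RI: "cov_deriv g (cov_deriv g ?T) x (a # b # [c, d, e, f]) - cov_deriv g (cov_deriv g ?T) x (b # a # [c, d, e, f])
    = - (\<Sum>p<length [c, d, e, f]. \<Sum>j\<in>UNIV. Rup g x a b ([c, d, e, f]!p) j * ?T x ([c, d, e, f][p := j]))"
    by (rule ricci_identity_smooth[OF Rdown_smooth x])
  have "cov_deriv g (cov_deriv g ?T) x [a, b, c, d, e, f] - cov_deriv g (cov_deriv g ?T) x [b, a, c, d, e, f] = 0"
    using ss x unfolding semisymmetric_on_def Let_def by blast
  then have "(\<Sum>p<length [c, d, e, f]. \<Sum>j\<in>UNIV. Rup g x a b ([c, d, e, f]!p) j * ?T x ([c, d, e, f][p := j])) = 0"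
    using RI by simp
  then show ?thesis by (simp add: numeral_eq_Suc sum.distrib add.assoc)
qed

lemma semisymmetric_curvature_at:
  assumes ss: "semisymmetric_on U g" and x: "x \<in> U"
  shows "semisymmetric_curvature (Rup g x) (Rdown g x) (\<lambda>i j. g x $ i $ j) (ginv g x)"
  by unfold_locales
    (rule Rup_antisym Rup_bianchi[OF x] metric_sym[OF x] metric_ginv[OF x] Rdown_def
       Rdown_antisym[OF x] semisymmetry_condition[OF ss x])+

end


theorem mainTheorem8:
  fixes U :: "(real^'n::finite) set" and g :: "real^'n \<Rightarrow> real^'n^'n"
  assumes "riemannian_metric_on U g"
    and "semisymmetric_on U g"
  shows "\<forall>x\<in>U. \<forall>a b c d e f.
    (\<Sum>m\<in>UNIV. Rup g x a b c m * Rup g x d m e f + Rup g x b c d m * Rup g x a m e f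
       + Rup g x c d a m * Rup g x b m e f + Rup g x d a b m * Rup g x c m e f
       - Rup g x a c e m * Rup g x b d m f + Rup g x a c m f * Rup g x b d e m) = 0
    \<and> (\<Sum>m\<in>UNIV. Ric g x a m * Rup g x b c e m + Ric g x b m * Rup g x c a e m
       + Ric g x c m * Rup g x a b e m) = 0
    \<and> (\<Sum>m\<in>UNIV. Ric g x a m * Rup g x b e c m - Ric g x b m * Rup g x a c e m
       + Ric g x c m * Rup g x e b a m - Ric g x e m * Rup g x c a b m) = 0"
proof -
  have C: "semisymmetric_curvature (Rup g x) (Rdown g x) (\<lambda>i j. g x $ i $ j) (ginv g x)"
    if "x \<in> U" for x
    using metric_chart.semisymmetric_curvature_at[OF metric_chart.intro[OF assms(1)] assms(2) that] .
  have Ric: "Ric g x = ricci_contraction (Rup g x)" for x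
    by (intro ext) (simp add: Ric_def ricci_contraction_def)
  show ?thesis
    unfolding Ric
    using semisymmetric_curvature.curvature_quadratic_identity[OF C]
      semisymmetric_curvature.ric_curvature_cyclic[OF C]
      semisymmetric_curvature.ric_curvature_four_term[OF C]
    by blast
qed

end
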